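(* Let $m,n\ge1$ with $m+n\ge3$ and $s>1$. Let $P\in\mathbb{R}^{2m\times 2n}$ be the block matrix $P=\begin{bmatrix} s\mathbf{1} & \mathbf{1}\\ \mathbf{1} & s\mathbf{1}\end{bmatrix}$ with $m\times n$ blocks, where $\mathbf{1}$ is the all-ones matrix. For non-negative $Q\in\mathbb{R}^{2m\times 2n}$ with no zero row or column, let $J(Q)=\|Q-P\|_F^2 - \lambda(\sigma_1(B(Q))+\sigma_2(B(Q)))$, where $\lambda>0$ and $B(Q)$ is the DTM of the joint pmf $Q/(\mathbf{1}^TQ\mathbf{1})$. Let $Q_1=\begin{bmatrix} s\mathbf{1} & \mathbf{0}\\ \mathbf{0} & s\mathbf{1}\end{bmatrix}$ (with $m\times n$ blocks) and let $Q_2$ be obtained from $P$ by setting to $0$ all entries of the last row and of the last column except the $(2m,2n)$ entry, which equals $s$. Then $J(Q_1)=2mn-2\lambda$ and $J(Q_2)=m+n+s^2(m+n-2)-2\lambda$. Consequently, if $s<\sqrt{(2mn-m-n)/(m+n-2)}$, then $J(Q_2)<J(Q_1)$, so $Q_1$ is not a global minimizer of $J$ over non-negative matrices.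
   Context: For a joint pmf $P_{Y,X}$ (viewed as a matrix) with strictly positive marginals $P_Y$ (row sums) and $P_X$ (column sums), the divergence transition matrix is $B(P_{Y,X})=[P_Y]^{-1/2}P_{Y,X}[P_X]^{-1/2}$, where $[P]$ is the diagonal matrix with $P$ on its diagonal; its singular values are $\sigma_1\ge\sigma_2\ge\cdots$ and $\sigma_1=1$. $\|\cdot\|_F$ is the Frobenius norm. *)

theory Defs
  imports "Jordan_Normal_Form.Char_Poly" "HOL-Computational_Algebra.Polynomial"
begin

definition diag_of :: "nat \<Rightarrow> (nat \<Rightarrow> real) \<Rightarrow> real mat" where
  "diag_of k p = mat k k (\<lambda>(i,j). if i = j then p i else 0)"

definition row_sums :: "real mat \<Rightarrow> nat \<Rightarrow> real" where
  "row_sums A i = (\<Sum>j<dim_col A. A $$ (i,j))"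

definition col_sums :: "real mat \<Rightarrow> nat \<Rightarrow> real" where
  "col_sums A j = (\<Sum>i<dim_row A. A $$ (i,j))"

definition dtm :: "real mat \<Rightarrow> real mat" where
  "dtm P = diag_of (dim_row P) (\<lambda>i. 1 / sqrt (row_sums P i)) * P
           * diag_of (dim_col P) (\<lambda>j. 1 / sqrt (col_sums P j))"

(* singular values in non-increasing order: square roots of the eigenvalues
   (with multiplicity) of B^T B; sing_val B k is sigma_k (1-based) *)
definition sing_vals :: "real mat \<Rightarrow> real list" where
  "sing_vals B = rev (sorted_list_of_multiset
      (image_mset sqrt (proots (char_poly (transpose_mat B * B)))))"

definition sing_val :: "real mat \<Rightarrow> nat \<Rightarrow> real" where
  "sing_val B k = sing_vals B ! (k - 1)"

definition frob_norm :: "real mat \<Rightarrow> real" where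
  "frob_norm A = sqrt (\<Sum>i<dim_row A. \<Sum>j<dim_col A. (A $$ (i,j))^2)"

definition total_sum :: "real mat \<Rightarrow> real" where
  "total_sum A = (\<Sum>i<dim_row A. \<Sum>j<dim_col A. A $$ (i,j))"

definition J_obj :: "real mat \<Rightarrow> real \<Rightarrow> real mat \<Rightarrow> real" where
  "J_obj P lam Q = (frob_norm (Q - P))^2
     - lam * (sing_val (dtm ((1 / total_sum Q) \<cdot>\<^sub>m Q)) 1
              + sing_val (dtm ((1 / total_sum Q) \<cdot>\<^sub>m Q)) 2)"

definition admissible :: "nat \<Rightarrow> nat \<Rightarrow> real mat \<Rightarrow> bool" where
  "admissible k l Q \<longleftrightarrow> Q \<in> carrier_mat k l
     \<and> (\<forall>i<k. \<forall>j<l. Q $$ (i,j) \<ge> 0)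
     \<and> (\<forall>i<k. \<exists>j<l. Q $$ (i,j) \<noteq> 0)
     \<and> (\<forall>j<l. \<exists>i<k. Q $$ (i,j) \<noteq> 0)"

(* P = [s1 1; 1 s1] with m x n blocks (0-based indices) *)
definition P_mat :: "nat \<Rightarrow> nat \<Rightarrow> real \<Rightarrow> real mat" where
  "P_mat m n s = mat (2*m) (2*n) (\<lambda>(i,j). if (i < m) = (j < n) then s else 1)"

definition Q1_mat :: "nat \<Rightarrow> nat \<Rightarrow> real \<Rightarrow> real mat" where
  "Q1_mat m n s = mat (2*m) (2*n) (\<lambda>(i,j). if (i < m) = (j < n) then s else 0)"

definition Q2_mat :: "nat \<Rightarrow> nat \<Rightarrow> real \<Rightarrow> real mat" where
  "Q2_mat m n s = mat (2*m) (2*n) (\<lambda>(i,j).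
     if i = 2*m - 1 \<and> j = 2*n - 1 then s
     else if i = 2*m - 1 \<or> j = 2*n - 1 then 0
     else if (i < m) = (j < n) then s else 1)"

end

theory Submission
  imports Defs
begin

text \<open>For a non-negative matrix with positive row and column sums, its DTM \<open>B\<close> maps the vector
  \<open>\<surd>P\<^sub>X\<close> to \<open>\<surd>P\<^sub>Y\<close> and \<open>B\<^sup>T\<close> maps it back, while a weighted Cauchy-Schwarz
  inequality gives \<open>\<parallel>B v\<parallel> \<le> \<parallel>v\<parallel>\<close>; so \<open>1\<close> is the largest eigenvalue of \<open>B\<^sup>T B\<close>. When the
  support of the matrix splits into two diagonal blocks, \<open>B\<^sup>T B\<close> is block diagonal and
  \<open>\<surd>P\<^sub>X\<close> restricts to a \<open>1\<close>-eigenvector of each block, so \<open>\<sigma>\<^sub>1 = \<sigma>\<^sub>2 = 1\<close>. Both \<open>Q\<^sub>1\<close>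
  and \<open>Q\<^sub>2\<close> have such a support (for \<open>Q\<^sub>2\<close> the last row and column form the second
  block), hence \<open>J(Q) = \<parallel>Q - P\<parallel>\<^sub>F\<^sup>2 - 2\<lambda>\<close> for both, and the Frobenius distances are a
  matter of counting.\<close>

lemma sum_lessThan_if_less:
  assumes "a \<le> N"
  shows "(\<Sum>i<N. if i < a then x else y) = real a * x + real (N - a) * (y::real)"
proof -
  have "(\<Sum>i<N. if i < a then x else y)
      = (\<Sum>i\<in>{0..<a}. if i < a then x else y) + (\<Sum>i\<in>{a..<N}. if i < a then x else y)"
    unfolding lessThan_atLeast0 using assms by (intro sum.atLeastLessThan_concat[symmetric]) auto
  also have "\<dots> = (\<Sum>i\<in>{0..<a}. x) + (\<Sum>i\<in>{a..<N}. y)"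
    by (intro arg_cong2[where f = "(+)"] sum.cong) auto
  finally show ?thesis by simp
qed

lemma weighted_cauchy_schwarz:
  fixes w z :: "'a \<Rightarrow> real"
  assumes "finite A" "\<And>j. j \<in> A \<Longrightarrow> w j \<ge> 0"
  shows "(\<Sum>j\<in>A. w j * z j)^2 \<le> (\<Sum>j\<in>A. w j) * (\<Sum>j\<in>A. w j * (z j)^2)"
proof -
  have "0 \<le> (\<Sum>j\<in>A. \<Sum>k\<in>A. w j * w k * (z j - z k)^2)"
    using assms by (intro sum_nonneg) auto
  also have "\<dots> = (\<Sum>j\<in>A. \<Sum>k\<in>A. w j * (z j)^2 * w k)
      + (\<Sum>j\<in>A. \<Sum>k\<in>A. w j * (w k * (z k)^2))
      - 2 * (\<Sum>j\<in>A. \<Sum>k\<in>A. (w j * z j) * (w k * z k))"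
    by (simp add: power2_eq_square algebra_simps sum.distrib sum_subtractf sum_distrib_left)
  also have "\<dots> = 2 * ((\<Sum>j\<in>A. w j) * (\<Sum>j\<in>A. w j * (z j)^2)) - 2 * (\<Sum>j\<in>A. w j * z j)^2"
    by (simp add: power2_eq_square sum_distrib_left[symmetric] sum_distrib_right[symmetric])
  finally show ?thesis by simp
qed

lemma rev_sorted_list_of_multiset_add_top_pair:
  fixes S :: "'a::linorder multiset"
  assumes "\<forall>x\<in>#S. x \<le> c"
  shows "rev (sorted_list_of_multiset (S + {#c, c#})) ! 0 = c"
    and "rev (sorted_list_of_multiset (S + {#c, c#})) ! 1 = c"
proof -
  define ys where "ys = sorted_list_of_multiset S @ [c, c]"
  have "sorted ys"
    unfolding ys_def using assms by (auto simp: sorted_append)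
  moreover have "mset ys = S + {#c, c#}"
    unfolding ys_def by simp
  ultimately have "sorted_list_of_multiset (S + {#c, c#}) = ys"
    by (metis sorted_list_of_multiset_mset sorted_sort_id)
  then show "rev (sorted_list_of_multiset (S + {#c, c#})) ! 0 = c"
    and "rev (sorted_list_of_multiset (S + {#c, c#})) ! 1 = c"
    by (simp_all add: ys_def nth_append)
qed

lemma char_poly_four_block_zero_lower_left:
  fixes A D :: "'a::field mat"
  assumes A: "A \<in> carrier_mat a a" and B: "B \<in> carrier_mat a b" and D: "D \<in> carrier_mat b b"
  shows "char_poly (four_block_mat A B (0\<^sub>m b a) D) = char_poly A * char_poly D"
proof -
  let ?cm = "\<lambda>A. [:0, 1:] \<cdot>\<^sub>m 1\<^sub>m (dim_row A) + map_mat (\<lambda>x. [:- x:]) A"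
  have "?cm (four_block_mat A B (0\<^sub>m b a) D)
      = four_block_mat (?cm A) (map_mat (\<lambda>x. [:- x:]) B) (0\<^sub>m b a) (?cm D)"
    by (rule eq_matI) (use A B D in auto)
  moreover have "det (four_block_mat (?cm A) (map_mat (\<lambda>x. [:- x:]) B) (0\<^sub>m b a) (?cm D))
      = det (?cm A) * det (?cm D)"
    by (rule det_four_block_mat_lower_left_zero) (use A B D in auto)
  ultimately show ?thesis
    unfolding char_poly_defs by simp
qed

lemma order_char_poly_four_block_zero_lower_left:
  fixes A D :: "'a::field mat"
  assumes A: "A \<in> carrier_mat a a" and B: "B \<in> carrier_mat a b" and D: "D \<in> carrier_mat b b"
  shows "order x (char_poly (four_block_mat A B (0\<^sub>m b a) D))
    = order x (char_poly A) + order x (char_poly D)"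
proof -
  have "char_poly A \<noteq> 0" "char_poly D \<noteq> 0"
    using degree_monic_char_poly[OF A] degree_monic_char_poly[OF D] by auto
  then show ?thesis
    by (simp add: char_poly_four_block_zero_lower_left[OF A B D] order_mult)
qed

lemma eigenvalue_imp_order_char_poly_pos:
  fixes A :: "'a::field mat"
  assumes A: "A \<in> carrier_mat n n" and "eigenvalue A x"
  shows "order x (char_poly A) > 0"
proof -
  have "char_poly A \<noteq> 0"
    using degree_monic_char_poly[OF A] by auto
  then show ?thesis
    using assms eigenvalue_root_char_poly[OF A] order_gt_0_iff by blast
qed

lemma block_diag_eigenvector_blocks:
  fixes A D :: "'a::comm_ring_1 mat"
  assumes A: "A \<in> carrier_mat n n" and D: "D \<in> carrier_mat m m"
    and a: "a \<in> carrier_vec n" and d: "d \<in> carrier_vec m"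
    and eq: "four_block_mat A (0\<^sub>m n m) (0\<^sub>m m n) D *\<^sub>v (a @\<^sub>v d) = x \<cdot>\<^sub>v (a @\<^sub>v d)"
  shows "A *\<^sub>v a = x \<cdot>\<^sub>v a" and "D *\<^sub>v d = x \<cdot>\<^sub>v d"
proof -
  have "x \<cdot>\<^sub>v (a @\<^sub>v d) = x \<cdot>\<^sub>v a @\<^sub>v x \<cdot>\<^sub>v d"
    by (rule eq_vecI) (use a d in auto)
  then have "A *\<^sub>v a @\<^sub>v D *\<^sub>v d = x \<cdot>\<^sub>v a @\<^sub>v x \<cdot>\<^sub>v d"
    using eq mult_mat_vec_split[OF A D a d] by simp
  then show "A *\<^sub>v a = x \<cdot>\<^sub>v a" and "D *\<^sub>v d = x \<cdot>\<^sub>v d"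
    using A a by (subst (asm) append_vec_eq; auto)+
qed

lemma order_char_poly_block_diag_ge_2:
  fixes M :: "'a::field mat"
  assumes M: "M \<in> carrier_mat l l" and a: "0 < a" "a < l"
    and off_diag: "\<And>i j. i < l \<Longrightarrow> j < l \<Longrightarrow> (i < a) \<noteq> (j < a) \<Longrightarrow> M $$ (i,j) = 0"
    and u: "u \<in> carrier_vec l" and Mu: "M *\<^sub>v u = x \<cdot>\<^sub>v u"
    and u_first: "u $ 0 \<noteq> 0" and u_second: "u $ a \<noteq> 0"
  shows "order x (char_poly M) \<ge> 2"
proof -
  obtain A B C D where split: "split_block M a a = (A, B, C, D)"
    by (metis prod_cases4)
  have dims: "dim_row M = a + (l - a)" "dim_col M = a + (l - a)"
    using M a by auto
  note blocks = split_block[OF split dims]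
  have "B = 0\<^sub>m a (l - a)"
    using split M a by (simp add: split_block_def Let_def) (rule eq_matI; auto intro!: off_diag)
  moreover have "C = 0\<^sub>m (l - a) a"
    using split M a by (simp add: split_block_def Let_def) (rule eq_matI; auto intro!: off_diag)
  ultimately have M_blocks: "M = four_block_mat A (0\<^sub>m a (l - a)) (0\<^sub>m (l - a) a) D"
    using blocks(5) by simp
  define u1 u2 where "u1 = vec_first u a" and "u2 = vec_last u (l - a)"
  have u1: "u1 \<in> carrier_vec a" and u2: "u2 \<in> carrier_vec (l - a)"
    unfolding u1_def u2_def by simp_all
  have "u = u1 @\<^sub>v u2"
    unfolding u1_def u2_def using u a by simp
  then have "four_block_mat A (0\<^sub>m a (l - a)) (0\<^sub>m (l - a) a) D *\<^sub>v (u1 @\<^sub>v u2) = x \<cdot>\<^sub>v (u1 @\<^sub>v u2)"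
    using Mu unfolding M_blocks by simp
  note eigen = block_diag_eigenvector_blocks[OF blocks(1,4) u1 u2 this]
  have "u1 $ 0 \<noteq> 0" and "u2 $ 0 \<noteq> 0"
    using u_first u_second u a unfolding u1_def u2_def vec_first_def vec_last_def by auto
  then have "u1 \<noteq> 0\<^sub>v a" and "u2 \<noteq> 0\<^sub>v (l - a)"
    using a by auto
  then have "eigenvector A u1 x" and "eigenvector D u2 x"
    using blocks(1,4) eigen u1 u2 unfolding eigenvector_def by auto
  then have "eigenvalue A x" and "eigenvalue D x"
    unfolding eigenvalue_def by blast+
  then have "order x (char_poly A) > 0" and "order x (char_poly D) > 0"
    using eigenvalue_imp_order_char_poly_pos blocks(1,4) by blast+
  then show ?thesis
    by (simp add: M_blocks order_char_poly_four_block_zero_lower_left[OF blocks(1) _ blocks(4)])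
qed

lemma row_sums_carrier: "P \<in> carrier_mat k l \<Longrightarrow> row_sums P i = (\<Sum>j<l. P $$ (i,j))"
  by (simp add: row_sums_def)

lemma col_sums_carrier: "P \<in> carrier_mat k l \<Longrightarrow> col_sums P j = (\<Sum>i<k. P $$ (i,j))"
  by (simp add: col_sums_def)

lemma diag_of_mult_index:
  assumes "A \<in> carrier_mat k l" "i < k" "j < l"
  shows "(diag_of k d * A) $$ (i,j) = d i * A $$ (i,j)"
proof -
  have "(\<Sum>r<k. (if i = r then d i else 0) * A $$ (r,j)) = (\<Sum>r<k. if r = i then d i * A $$ (i,j) else 0)"
    by (rule sum.cong) auto
  then show ?thesis
    using assms by (simp add: diag_of_def scalar_prod_def row_def col_def atLeast0LessThan)
qed

lemma mult_diag_of_index: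
  assumes "A \<in> carrier_mat k l" "i < k" "j < l"
  shows "(A * diag_of l d) $$ (i,j) = A $$ (i,j) * d j"
proof -
  have "(\<Sum>r<l. A $$ (i,r) * (if r = j then d r else 0)) = (\<Sum>r<l. if r = j then A $$ (i,j) * d j else 0)"
    by (rule sum.cong) auto
  then show ?thesis
    using assms by (simp add: diag_of_def scalar_prod_def row_def col_def atLeast0LessThan)
qed

lemma dtm_carrier: "P \<in> carrier_mat k l \<Longrightarrow> dtm P \<in> carrier_mat k l"
  unfolding dtm_def diag_of_def by auto

lemma dtm_index:
  assumes P: "P \<in> carrier_mat k l" and "i < k" "j < l"
  shows "dtm P $$ (i,j) = P $$ (i,j) / (sqrt (row_sums P i) * sqrt (col_sums P j))"
proof -
  have "diag_of k (\<lambda>i. 1 / sqrt (row_sums P i)) * P \<in> carrier_mat k l"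
    using P unfolding diag_of_def by auto
  from mult_diag_of_index[OF this] show ?thesis
    using assms unfolding dtm_def by (simp add: diag_of_mult_index)
qed

context
  fixes P :: "real mat" and k l :: nat
  assumes P: "P \<in> carrier_mat k l"
    and nonneg: "\<And>i j. i < k \<Longrightarrow> j < l \<Longrightarrow> P $$ (i,j) \<ge> 0"
    and row_pos: "\<And>i. i < k \<Longrightarrow> row_sums P i > 0"
    and col_pos: "\<And>j. j < l \<Longrightarrow> col_sums P j > 0"
begin

lemma dtm_mult_sqrt_col_sums:
  "dtm P *\<^sub>v vec l (\<lambda>j. sqrt (col_sums P j)) = vec k (\<lambda>i. sqrt (row_sums P i))"
proof (rule eq_vecI)
  fix i assume "i < dim_vec (vec k (\<lambda>i. sqrt (row_sums P i)))"
  then have i: "i < k" by simp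
  have "(dtm P *\<^sub>v vec l (\<lambda>j. sqrt (col_sums P j))) $ i
      = (\<Sum>j<l. P $$ (i,j) / (sqrt (row_sums P i) * sqrt (col_sums P j)) * sqrt (col_sums P j))"
    using i dtm_carrier[OF P] dtm_index[OF P i]
    by (simp add: mult_mat_vec_def scalar_prod_def atLeast0LessThan)
  also have "\<dots> = row_sums P i / sqrt (row_sums P i)"
    unfolding row_sums_carrier[OF P] sum_divide_distrib
    by (rule sum.cong[OF refl]) (use col_pos in fastforce)
  also have "\<dots> = sqrt (row_sums P i)"
    using row_pos[OF i] by (simp add: real_div_sqrt)
  finally show "(dtm P *\<^sub>v vec l (\<lambda>j. sqrt (col_sums P j))) $ i = vec k (\<lambda>i. sqrt (row_sums P i)) $ i"
    using i by simp
qed (use dtm_carrier[OF P] in auto)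

lemma transpose_dtm_mult_sqrt_row_sums:
  "transpose_mat (dtm P) *\<^sub>v vec k (\<lambda>i. sqrt (row_sums P i)) = vec l (\<lambda>j. sqrt (col_sums P j))"
proof (rule eq_vecI)
  fix j assume "j < dim_vec (vec l (\<lambda>j. sqrt (col_sums P j)))"
  then have j: "j < l" by simp
  have "(transpose_mat (dtm P) *\<^sub>v vec k (\<lambda>i. sqrt (row_sums P i))) $ j
      = (\<Sum>i<k. P $$ (i,j) / (sqrt (row_sums P i) * sqrt (col_sums P j)) * sqrt (row_sums P i))"
    using j dtm_carrier[OF P] dtm_index[OF P _ j]
    by (simp add: mult_mat_vec_def scalar_prod_def atLeast0LessThan)
  also have "\<dots> = col_sums P j / sqrt (col_sums P j)"
    unfolding col_sums_carrier[OF P] sum_divide_distrib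
    by (rule sum.cong[OF refl]) (use row_pos in fastforce)
  also have "\<dots> = sqrt (col_sums P j)"
    using col_pos[OF j] by (simp add: real_div_sqrt)
  finally show "(transpose_mat (dtm P) *\<^sub>v vec k (\<lambda>i. sqrt (row_sums P i))) $ j
      = vec l (\<lambda>j. sqrt (col_sums P j)) $ j"
    using j by simp
qed (use dtm_carrier[OF P] in auto)

lemma dtm_norm_contraction:
  assumes v: "v \<in> carrier_vec l"
  shows "(dtm P *\<^sub>v v) \<bullet> (dtm P *\<^sub>v v) \<le> v \<bullet> v"
proof -
  have entry: "(dtm P *\<^sub>v v) $ i
      = (\<Sum>j<l. P $$ (i,j) * (v $ j / sqrt (col_sums P j))) / sqrt (row_sums P i)" if i: "i < k" for i
    using i v dtm_carrier[OF P] dtm_index[OF P i]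
    by (simp add: mult_mat_vec_def scalar_prod_def atLeast0LessThan sum_divide_distrib mult.commute)
  have entry_sq: "((dtm P *\<^sub>v v) $ i)^2 \<le> (\<Sum>j<l. P $$ (i,j) * (v $ j)^2 / col_sums P j)"
    if i: "i < k" for i
  proof -
    have "((dtm P *\<^sub>v v) $ i)^2
        = (\<Sum>j<l. P $$ (i,j) * (v $ j / sqrt (col_sums P j)))^2 / row_sums P i"
      unfolding entry[OF i] using row_pos[OF i] by (simp add: power_divide)
    also have "\<dots> \<le> row_sums P i * (\<Sum>j<l. P $$ (i,j) * (v $ j / sqrt (col_sums P j))^2) / row_sums P i"
      using weighted_cauchy_schwarz[of "{..<l}" "\<lambda>j. P $$ (i,j)" "\<lambda>j. v $ j / sqrt (col_sums P j)"]
        nonneg[OF i] row_pos[OF i]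
      unfolding row_sums_carrier[OF P] by (intro divide_right_mono) auto
    also have "\<dots> = (\<Sum>j<l. P $$ (i,j) * (v $ j)^2 / col_sums P j)"
      using row_pos[OF i] col_pos by (auto simp: power_divide less_imp_le intro!: sum.cong)
    finally show ?thesis .
  qed
  have "(dtm P *\<^sub>v v) \<bullet> (dtm P *\<^sub>v v) = (\<Sum>i<k. ((dtm P *\<^sub>v v) $ i)^2)"
    using dtm_carrier[OF P] by (simp add: scalar_prod_def atLeast0LessThan power2_eq_square)
  also have "\<dots> \<le> (\<Sum>i<k. \<Sum>j<l. P $$ (i,j) * (v $ j)^2 / col_sums P j)"
    by (rule sum_mono) (simp add: entry_sq)
  also have "\<dots> = (\<Sum>j<l. col_sums P j * (v $ j)^2 / col_sums P j)"
    unfolding col_sums_carrier[OF P]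
    by (subst sum.swap) (simp add: sum_distrib_right sum_divide_distrib)
  also have "\<dots> = (\<Sum>j<l. (v $ j)^2)"
    by (rule sum.cong[OF refl]) (use col_pos in fastforce)
  also have "\<dots> = v \<bullet> v"
    using v by (simp add: scalar_prod_def atLeast0LessThan power2_eq_square)
  finally show ?thesis .
qed

lemma gram_dtm_carrier: "transpose_mat (dtm P) * dtm P \<in> carrier_mat l l"
  using dtm_carrier[OF P] by auto

lemma gram_dtm_eigenvalue_le_one:
  assumes "eigenvalue (transpose_mat (dtm P) * dtm P) x"
  shows "x \<le> 1"
proof -
  have B: "dtm P \<in> carrier_mat k l" by (rule dtm_carrier[OF P])
  obtain v where v: "v \<in> carrier_vec l" "v \<noteq> 0\<^sub>v l"
    and ev: "(transpose_mat (dtm P) * dtm P) *\<^sub>v v = x \<cdot>\<^sub>v v"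
    using assms gram_dtm_carrier unfolding eigenvalue_def eigenvector_def by auto
  have Bv: "dtm P *\<^sub>v v \<in> carrier_vec k" using B v(1) by simp
  have "x * (v \<bullet> v) = v \<bullet> ((transpose_mat (dtm P) * dtm P) *\<^sub>v v)"
    using ev v by simp
  also have "\<dots> = (transpose_mat (dtm P) *\<^sub>v (dtm P *\<^sub>v v)) \<bullet> v"
    using B v by (subst assoc_mult_mat_vec[of _ l k _ l]) (auto intro: comm_scalar_prod)
  also have "\<dots> = (dtm P *\<^sub>v v) \<bullet> (dtm P *\<^sub>v v)"
    by (rule transpose_vec_mult_scalar[OF B v(1) Bv])
  also have "\<dots> \<le> v \<bullet> v" by (rule dtm_norm_contraction[OF v(1)])
  finally have "x * (v \<bullet> v) \<le> v \<bullet> v" .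
  moreover have "v \<bullet> v > 0"
    using v by (simp add: conjugate_square_greater_0_vec[symmetric])
  ultimately show ?thesis by simp
qed

lemma dtm_block_support_top_sing_vals:
  assumes a: "0 < a" "a < l"
    and support: "\<And>i j. i < k \<Longrightarrow> j < l \<Longrightarrow> P $$ (i,j) \<noteq> 0 \<Longrightarrow> (i < p) = (j < a)"
  shows "sing_val (dtm P) 1 = 1" and "sing_val (dtm P) 2 = 1"
proof -
  let ?M = "transpose_mat (dtm P) * dtm P"
  let ?u = "vec l (\<lambda>j. sqrt (col_sums P j))"
  have off_diag: "?M $$ (j,j') = 0" if j: "j < l" "j' < l" and "(j < a) \<noteq> (j' < a)" for j j'
  proof -
    have "dtm P $$ (i,j) * dtm P $$ (i,j') = 0" if i: "i < k" for i
      using support[OF i j(1)] support[OF i j(2)] \<open>(j < a) \<noteq> (j' < a)\<close>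
        dtm_index[OF P i j(1)] dtm_index[OF P i j(2)] by fastforce
    then show ?thesis
      using j dtm_carrier[OF P] by (simp add: scalar_prod_def sum.neutral)
  qed
  have "?M *\<^sub>v ?u = 1 \<cdot>\<^sub>v ?u"
    using dtm_carrier[OF P] by (simp add: dtm_mult_sqrt_col_sums transpose_dtm_mult_sqrt_row_sums)
  moreover have "?u $ 0 \<noteq> 0" "?u $ a \<noteq> 0"
    using a col_pos[of 0] col_pos[of a] by auto
  ultimately have order: "order 1 (char_poly ?M) \<ge> 2"
    using order_char_poly_block_diag_ge_2[OF gram_dtm_carrier a off_diag vec_carrier] by blast
  have nonzero: "char_poly ?M \<noteq> 0"
    using degree_monic_char_poly[OF gram_dtm_carrier] by auto
  define R where "R = proots (char_poly ?M) - {#1, 1#}"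
  have roots: "proots (char_poly ?M) = R + {#1, 1#}"
    unfolding R_def using order nonzero by (intro multiset_eqI) auto
  have "x \<le> 1" if "x \<in># R" for x
  proof -
    have "x \<in># proots (char_poly ?M)"
      using that roots by simp
    then have "poly (char_poly ?M) x = 0"
      using nonzero by simp
    then show ?thesis
      using gram_dtm_eigenvalue_le_one eigenvalue_root_char_poly[OF gram_dtm_carrier] by blast
  qed
  then have "\<forall>y\<in>#image_mset sqrt R. y \<le> 1"
    by auto
  then show "sing_val (dtm P) 1 = 1" and "sing_val (dtm P) 2 = 1"
    using rev_sorted_list_of_multiset_add_top_pair[of "image_mset sqrt R" 1]
    by (simp_all add: sing_val_def sing_vals_def roots)
qed

end

lemma admissible_row_sums_pos:
  assumes "admissible k l Q" "i < k"
  shows "row_sums Q i > 0"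
proof -
  obtain j where j: "j < l" "Q $$ (i,j) \<noteq> 0"
    using assms unfolding admissible_def by blast
  have "0 < (\<Sum>j<l. Q $$ (i,j))"
    using assms j by (intro sum_pos2[of _ j]) (auto simp: admissible_def order_le_less)
  then show ?thesis
    using assms(1) unfolding admissible_def by (auto simp: row_sums_def)
qed

lemma admissible_col_sums_pos:
  assumes "admissible k l Q" "j < l"
  shows "col_sums Q j > 0"
proof -
  obtain i where i: "i < k" "Q $$ (i,j) \<noteq> 0"
    using assms unfolding admissible_def by blast
  have "0 < (\<Sum>i<k. Q $$ (i,j))"
    using assms i by (intro sum_pos2[of _ i]) (auto simp: admissible_def order_le_less)
  then show ?thesis
    using assms(1) unfolding admissible_def by (auto simp: col_sums_def)
qed

lemma J_obj_block_support:
  assumes Q: "admissible k l Q" and k: "0 < k" and a: "0 < a" "a < l"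
    and support: "\<And>i j. i < k \<Longrightarrow> j < l \<Longrightarrow> Q $$ (i,j) \<noteq> 0 \<Longrightarrow> (i < p) = (j < a)"
  shows "J_obj P lam Q = (frob_norm (Q - P))^2 - 2 * lam"
proof -
  have carrier: "Q \<in> carrier_mat k l" and nonneg: "\<And>i j. i < k \<Longrightarrow> j < l \<Longrightarrow> Q $$ (i,j) \<ge> 0"
    using Q unfolding admissible_def by auto
  have "total_sum Q = (\<Sum>i<k. row_sums Q i)"
    using carrier by (simp add: total_sum_def row_sums_def)
  also have "\<dots> > 0"
    using k admissible_row_sums_pos[OF Q] by (intro sum_pos2[of _ 0]) (auto simp: order_le_less)
  finally have total: "total_sum Q > 0" .
  define N where "N = (1 / total_sum Q) \<cdot>\<^sub>m Q"
  have N: "N \<in> carrier_mat k l" using carrier by (simp add: N_def)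
  have N_index: "N $$ (i,j) = Q $$ (i,j) / total_sum Q" if "i < k" "j < l" for i j
    using that carrier by (simp add: N_def)
  have N_nonneg: "N $$ (i,j) \<ge> 0" if "i < k" "j < l" for i j
    using N_index[OF that] nonneg[OF that] total by simp
  have N_row_pos: "row_sums N i > 0" if "i < k" for i
    using N carrier that total admissible_row_sums_pos[OF Q that]
    by (simp add: row_sums_carrier N_index sum_divide_distrib[symmetric])
  have N_col_pos: "col_sums N j > 0" if "j < l" for j
    using N carrier that total admissible_col_sums_pos[OF Q that]
    by (simp add: col_sums_carrier N_index sum_divide_distrib[symmetric])
  have N_support: "(i < p) = (j < a)" if "i < k" "j < l" "N $$ (i,j) \<noteq> 0" for i j
    using support[OF that(1,2)] that N_index[OF that(1,2)] by auto
  note top = dtm_block_support_top_sing_vals[OF N N_nonneg N_row_pos N_col_pos a N_support]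
  show ?thesis
    using top unfolding J_obj_def N_def by simp
qed

lemma frob_norm_sq:
  "(frob_norm A)^2 = (\<Sum>i<dim_row A. \<Sum>j<dim_col A. (A $$ (i,j))^2)"
  unfolding frob_norm_def by (rule real_sqrt_pow2) (intro sum_nonneg zero_le_power2)

lemma admissible_Q1_mat:
  assumes "m \<ge> 1" "n \<ge> 1" "s > 0"
  shows "admissible (2*m) (2*n) (Q1_mat m n s)"
  unfolding admissible_def
proof (intro conjI allI impI)
  show "Q1_mat m n s \<in> carrier_mat (2*m) (2*n)" by (simp add: Q1_mat_def)
  show "Q1_mat m n s $$ (i,j) \<ge> 0" if "i < 2*m" "j < 2*n" for i j
    using that assms by (simp add: Q1_mat_def)
  show "\<exists>j<2*n. Q1_mat m n s $$ (i,j) \<noteq> 0" if "i < 2*m" for i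
    using that assms by (intro exI[of _ "if i < m then 0 else n"]) (auto simp: Q1_mat_def)
  show "\<exists>i<2*m. Q1_mat m n s $$ (i,j) \<noteq> 0" if "j < 2*n" for j
    using that assms by (intro exI[of _ "if j < n then 0 else m"]) (auto simp: Q1_mat_def)
qed

lemma admissible_Q2_mat:
  assumes "m \<ge> 1" "n \<ge> 1" "s > 0"
  shows "admissible (2*m) (2*n) (Q2_mat m n s)"
  unfolding admissible_def
proof (intro conjI allI impI)
  show "Q2_mat m n s \<in> carrier_mat (2*m) (2*n)" by (simp add: Q2_mat_def)
  show "Q2_mat m n s $$ (i,j) \<ge> 0" if "i < 2*m" "j < 2*n" for i j
    using that assms by (simp add: Q2_mat_def)
  show "\<exists>j<2*n. Q2_mat m n s $$ (i,j) \<noteq> 0" if "i < 2*m" for i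
    using that assms by (intro exI[of _ "if i = 2*m-1 then 2*n-1 else 0"]) (auto simp: Q2_mat_def)
  show "\<exists>i<2*m. Q2_mat m n s $$ (i,j) \<noteq> 0" if "j < 2*n" for j
    using that assms by (intro exI[of _ "if j = 2*n-1 then 2*m-1 else 0"]) (auto simp: Q2_mat_def)
qed

lemma frob_norm_Q1_minus_P:
  "(frob_norm (Q1_mat m n s - P_mat m n s))^2 = 2 * real m * real n"
proof -
  have row: "(\<Sum>j<2*n. ((Q1_mat m n s - P_mat m n s) $$ (i,j))^2) = real n" if i: "i < 2*m" for i
  proof -
    have "(\<Sum>j<2*n. ((Q1_mat m n s - P_mat m n s) $$ (i,j))^2)
        = (\<Sum>j<2*n. if j < n then (if i < m then 0 else 1) else (if i < m then 1 else 0))"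
      by (rule sum.cong[OF refl]) (use i in \<open>simp add: Q1_mat_def P_mat_def\<close>)
    also have "\<dots> = real n"
      by (subst sum_lessThan_if_less) auto
    finally show ?thesis .
  qed
  have "dim_row (Q1_mat m n s - P_mat m n s) = 2*m" "dim_col (Q1_mat m n s - P_mat m n s) = 2*n"
    by (simp_all add: P_mat_def)
  then have "(frob_norm (Q1_mat m n s - P_mat m n s))^2
      = (\<Sum>i<2*m. \<Sum>j<2*n. ((Q1_mat m n s - P_mat m n s) $$ (i,j))^2)"
    by (simp only: frob_norm_sq)
  also have "\<dots> = (\<Sum>i<2*m. real n)"
    by (rule sum.cong[OF refl]) (rule row, simp)
  finally show ?thesis
    by simp
qed

text \<open>Only the last row and the last column of \<open>Q\<^sub>2 - P\<close> are nonzero: in the last row the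
  entries are \<open>-1\<close> (\<open>n\<close> times) and \<open>-s\<close> (\<open>n - 1\<close> times), symmetrically in the last column.\<close>

lemma frob_norm_Q2_minus_P:
  assumes "m \<ge> 1" "n \<ge> 1"
  shows "(frob_norm (Q2_mat m n s - P_mat m n s))^2 = real m + real n + s^2 * (real m + real n - 2)"
proof -
  define g where "g i = (if i < m then 1 else s^2)" for i
  define h where "h j = (if j < n then 1 else s^2)" for j
  have entry: "((Q2_mat m n s - P_mat m n s) $$ (i,j))^2 =
     (if i = 2*m-1 \<and> j = 2*n-1 then 0 else if i = 2*m-1 then h j else if j = 2*n-1 then g i else 0)"
    if "i < 2*m" "j < 2*n" for i j
    using that assms by (auto simp: Q2_mat_def P_mat_def g_def h_def)
  have n_Suc: "2*n = Suc (2*n-1)" and m_Suc: "2*m = Suc (2*m-1)"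
    using assms by auto
  have sum_h: "(\<Sum>j<2*n-1. h j) = real n + real (n-1) * s^2"
    unfolding h_def using assms by (subst sum_lessThan_if_less) (auto simp: algebra_simps)
  have sum_g: "(\<Sum>i<2*m-1. g i) = real m + real (m-1) * s^2"
    unfolding g_def using assms by (subst sum_lessThan_if_less) (auto simp: algebra_simps)
  have row: "(\<Sum>j<2*n. ((Q2_mat m n s - P_mat m n s) $$ (i,j))^2)
      = (if i = 2*m-1 then real n + real (n-1) * s^2 else g i)" if i: "i < 2*m" for i
  proof -
    have "(\<Sum>j<2*n. ((Q2_mat m n s - P_mat m n s) $$ (i,j))^2)
      = (\<Sum>j<2*n. if i = 2*m-1 \<and> j = 2*n-1 then 0
                  else if i = 2*m-1 then h j else if j = 2*n-1 then g i else 0)"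
      using entry[OF i] by (intro sum.cong) auto
    also have "\<dots> = (\<Sum>j<2*n-1. if i = 2*m-1 then h j else 0) + (if i = 2*m-1 then 0 else g i)"
      by (subst n_Suc, subst sum.lessThan_Suc) (auto intro!: sum.cong)
    finally show ?thesis
      using sum_h by auto
  qed
  have "dim_row (Q2_mat m n s - P_mat m n s) = 2*m" "dim_col (Q2_mat m n s - P_mat m n s) = 2*n"
    by (simp_all add: P_mat_def)
  then have "(frob_norm (Q2_mat m n s - P_mat m n s))^2
      = (\<Sum>i<2*m. \<Sum>j<2*n. ((Q2_mat m n s - P_mat m n s) $$ (i,j))^2)"
    by (simp only: frob_norm_sq)
  also have "\<dots> = (\<Sum>i<2*m. if i = 2*m-1 then real n + real (n-1) * s^2 else g i)"
    using row by (intro sum.cong) auto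
  also have "\<dots> = (\<Sum>i<2*m-1. g i) + (real n + real (n-1) * s^2)"
    by (subst m_Suc, subst sum.lessThan_Suc) (auto intro!: sum.cong)
  also have "\<dots> = real m + real n + s^2 * (real m + real n - 2)"
    unfolding sum_g using assms by (simp add: algebra_simps)
  finally show ?thesis .
qed

lemma J_obj_Q1_mat:
  assumes "m \<ge> 1" "n \<ge> 1" "s > 0"
  shows "J_obj (P_mat m n s) lam (Q1_mat m n s) = 2 * real m * real n - 2 * lam"
proof -
  have "J_obj (P_mat m n s) lam (Q1_mat m n s) = (frob_norm (Q1_mat m n s - P_mat m n s))^2 - 2 * lam"
    by (rule J_obj_block_support[OF admissible_Q1_mat[OF assms], where a = n and p = m])
      (use assms in \<open>auto simp: Q1_mat_def split: if_splits\<close>)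
  then show ?thesis
    by (simp add: frob_norm_Q1_minus_P)
qed

lemma J_obj_Q2_mat:
  assumes "m \<ge> 1" "n \<ge> 1" "s > 0"
  shows "J_obj (P_mat m n s) lam (Q2_mat m n s) = real m + real n + s^2 * (real m + real n - 2) - 2 * lam"
proof -
  have "J_obj (P_mat m n s) lam (Q2_mat m n s) = (frob_norm (Q2_mat m n s - P_mat m n s))^2 - 2 * lam"
    by (rule J_obj_block_support[OF admissible_Q2_mat[OF assms], where a = "2*n-1" and p = "2*m-1"])
      (use assms in \<open>auto simp: Q2_mat_def split: if_splits\<close>)
  then show ?thesis
    by (simp add: frob_norm_Q2_minus_P[OF assms(1,2)])
qed

theorem mainTheorem6:
  fixes m n :: nat and s lam :: real
  assumes "m \<ge> 1" and "n \<ge> 1" and "m + n \<ge> 3" and "s > 1" and "lam > 0"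
  shows "J_obj (P_mat m n s) lam (Q1_mat m n s) = 2 * real m * real n - 2 * lam
    \<and> J_obj (P_mat m n s) lam (Q2_mat m n s)
        = real m + real n + s^2 * (real m + real n - 2) - 2 * lam
    \<and> (s < sqrt ((2 * real m * real n - real m - real n) / (real m + real n - 2)) \<longrightarrow>
        J_obj (P_mat m n s) lam (Q2_mat m n s) < J_obj (P_mat m n s) lam (Q1_mat m n s)
        \<and> \<not> (\<forall>Q. admissible (2*m) (2*n) Q \<longrightarrow>
               J_obj (P_mat m n s) lam (Q1_mat m n s) \<le> J_obj (P_mat m n s) lam Q))"
proof (intro conjI impI)
  have s: "s > 0" using assms(4) by simp
  note J1 = J_obj_Q1_mat[OF assms(1,2) s, of lam] and J2 = J_obj_Q2_mat[OF assms(1,2) s, of lam]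
  show "J_obj (P_mat m n s) lam (Q1_mat m n s) = 2 * real m * real n - 2 * lam" by (rule J1)
  show "J_obj (P_mat m n s) lam (Q2_mat m n s)
      = real m + real n + s^2 * (real m + real n - 2) - 2 * lam" by (rule J2)
  assume "s < sqrt ((2 * real m * real n - real m - real n) / (real m + real n - 2))"
  then have "sqrt (s^2) < sqrt ((2 * real m * real n - real m - real n) / (real m + real n - 2))"
    using s by simp
  then have "s^2 < (2 * real m * real n - real m - real n) / (real m + real n - 2)"
    by (simp only: real_sqrt_less_iff)
  moreover have "real m + real n - 2 > 0"
    using assms(3) by linarith
  ultimately have "s^2 * (real m + real n - 2) < 2 * real m * real n - real m - real n"
    by (simp add: pos_less_divide_eq)
  then show less: "J_obj (P_mat m n s) lam (Q2_mat m n s) < J_obj (P_mat m n s) lam (Q1_mat m n s)"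
    unfolding J1 J2 by simp
  show "\<not> (\<forall>Q. admissible (2*m) (2*n) Q \<longrightarrow>
      J_obj (P_mat m n s) lam (Q1_mat m n s) \<le> J_obj (P_mat m n s) lam Q)"
    using admissible_Q2_mat[OF assms(1,2) s] less by force
qed

end
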